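(* Let $\mathcal{B}$ be a complete topological ring and let $\mathrm{e}\colon\mathcal{B}\to\mathcal{B}\{T\}$ be a restricted exponential homomorphism. Assume that $\mathrm{e}$ has a local slice $s\in\mathcal{B}$ such that $\mathrm{e}(s)=s+T$. Then $\mathcal{B}\cong\mathcal{B}^{\mathrm{e}}\{s\}$ (that is, the continuous $\mathcal{B}^{\mathrm{e}}$-algebra homomorphism $\mathcal{B}^{\mathrm{e}}\{S\}\to\mathcal{B}$, $S\mapsto s$, is an isomorphism of topological rings), and under this identification $\mathrm{e}$ coincides with the homomorphism of topological $\mathcal{B}^{\mathrm{e}}$-algebras $\mathcal{B}^{\mathrm{e}}\{s\}\to\mathcal{B}^{\mathrm{e}}\{s\}\{T\}\cong\mathcal{B}^{\mathrm{e}}\{s,T\}$, $s\mapsto s+T$.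
   Context: Conventions: topological rings are linearly topologized with a countable fundamental system of open ideals; homomorphisms are continuous; complete means the canonical map to $\varprojlim_{\mathfrak{a}}\mathcal{B}/\mathfrak{a}$ (open ideals, discrete quotients) is a topological isomorphism. For a complete topological ring $\mathcal{C}$, $\mathcal{C}\{T_1,\dots,T_r\}$ denotes restricted power series (coefficients converging to $0$), topologized by the ideals of series with all coefficients in a given open ideal of $\mathcal{C}$. A restricted exponential homomorphism is a continuous ring homomorphism $\mathrm{e}\colon\mathcal{B}\to\mathcal{B}\{T\}$, $\mathrm{e}(b)=\sum_i\mathrm{e}_i(b)T^i$, with $\mathrm{e}_0=\mathrm{id}_{\mathcal{B}}$ and $\sum_{i,j}\mathrm{e}_j(\mathrm{e}_i(b))T'^jT^i=\sum_\ell\mathrm{e}_\ell(b)(T+T')^\ell$ in $\mathcal{B}\{T,T'\}$ for all $b$. $\mathcal{B}^{\mathrm{e}}=\{b:\mathrm{e}(b)=b\}$ with the induced topology (a complete subring). A local slice is $s\in\mathcal{B}$ with $\mathrm{e}(s)$ a polynomial of degree $1$ in $T$. *)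

theory Defs
  imports Main
begin

text \<open>A linear topology with a countable fundamental system of open ideals is
  given by a decreasing chain U 0 \<supseteq> U 1 \<supseteq> ... of ideals.\<close>

definition is_ideal :: "'a::comm_ring_1 set \<Rightarrow> bool" where
  "is_ideal I \<longleftrightarrow> 0 \<in> I \<and> (\<forall>x\<in>I. \<forall>y\<in>I. x + y \<in> I) \<and> (\<forall>r x. x \<in> I \<longrightarrow> r * x \<in> I)"

definition lin_top :: "(nat \<Rightarrow> 'a::comm_ring_1 set) \<Rightarrow> bool" where
  "lin_top U \<longleftrightarrow> (\<forall>n. is_ideal (U n)) \<and> (\<forall>n. U (Suc n) \<subseteq> U n)"

text \<open>Completeness: the canonical map to the inverse limit of the B/U n is bijective
  (then it is automatically a topological isomorphism).\<close>
definition complete_lt :: "(nat \<Rightarrow> 'a::comm_ring_1 set) \<Rightarrow> bool" where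
  "complete_lt U \<longleftrightarrow> (\<Inter>n. U n) = {0} \<and>
     (\<forall>x. (\<forall>n. x (Suc n) - x n \<in> U n) \<longrightarrow> (\<exists>y. \<forall>n. y - x n \<in> U n))"

definition null_seq :: "(nat \<Rightarrow> 'a::comm_ring_1 set) \<Rightarrow> (nat \<Rightarrow> 'a) \<Rightarrow> bool" where
  "null_seq U a \<longleftrightarrow> (\<forall>n. \<exists>N. \<forall>i\<ge>N. a i \<in> U n)"

definition sums_in :: "(nat \<Rightarrow> 'a::comm_ring_1 set) \<Rightarrow> (nat \<Rightarrow> 'a) \<Rightarrow> 'a \<Rightarrow> bool" where
  "sums_in U a x \<longleftrightarrow> (\<forall>n. \<exists>N. \<forall>M\<ge>N. x - (\<Sum>i<M. a i) \<in> U n)"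

text \<open>Restricted power series in one variable with coefficients in the subring C
  (with the topology induced by U).\<close>
definition rps :: "'a::comm_ring_1 set \<Rightarrow> (nat \<Rightarrow> 'a set) \<Rightarrow> (nat \<Rightarrow> 'a) set" where
  "rps C U = {a. (\<forall>i. a i \<in> C) \<and> null_seq U a}"

definition cprod :: "(nat \<Rightarrow> 'a::comm_ring_1) \<Rightarrow> (nat \<Rightarrow> 'a) \<Rightarrow> nat \<Rightarrow> 'a" where
  "cprod a b = (\<lambda>n. \<Sum>i\<le>n. a i * b (n - i))"

definition rps_eval :: "(nat \<Rightarrow> 'a::comm_ring_1 set) \<Rightarrow> 'a \<Rightarrow> (nat \<Rightarrow> 'a) \<Rightarrow> 'a" where
  "rps_eval U s a = (THE x. sums_in U (\<lambda>i. a i * s ^ i) x)"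

text \<open>A restricted exponential homomorphism e : B \<rightarrow> B{T}, written via its
  coefficient maps: e i b is the coefficient of T^i in e(b).\<close>
definition rexp_hom :: "(nat \<Rightarrow> 'a::comm_ring_1 set) \<Rightarrow> (nat \<Rightarrow> 'a \<Rightarrow> 'a) \<Rightarrow> bool" where
  "rexp_hom U e \<longleftrightarrow>
     (\<forall>b. null_seq U (\<lambda>i. e i b)) \<and>
     (\<forall>i b c. e i (b + c) = e i b + e i c) \<and>
     (\<forall>n b c. e n (b * c) = cprod (\<lambda>i. e i b) (\<lambda>i. e i c) n) \<and>
     (\<forall>i. e i 1 = (if i = 0 then 1 else 0)) \<and>
     (\<forall>n. \<exists>m. \<forall>b\<in>U m. \<forall>i. e i b \<in> U n) \<and>
     (\<forall>b. e 0 b = b) \<and>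
     (\<forall>i j b. e j (e i b) = of_nat ((i + j) choose i) * e (i + j) b)"

definition fixed_ring :: "(nat \<Rightarrow> 'a::comm_ring_1 \<Rightarrow> 'a) \<Rightarrow> 'a set" where
  "fixed_ring e = {b. \<forall>i>0. e i b = 0}"

end

theory Submission
  imports Defs HOL.Modules
begin

text \<open>
  The slice s gives the Dixmier map pi(b) = sum_k e_k(b) (-s)^k, that is e(b) evaluated at
  T = -s. Expanding e_j(pi b) with the Leibniz rule and e_j(e_k b) = C(j+k,k) e_(j+k)(b), each
  Leibniz term becomes a multiple of one common series, with weights (-1)^d C(j,d) that add up
  to 0 for j > 0; so pi maps B into B^e. Since e(s^i) = (s+T)^i, pi kills c s^i for i > 0 and
  fixes B^e, hence pi(e_j(sum a_i s^i)) = a_j recovers the coefficients, which gives injectivity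
  and continuity of the inverse. Conversely b = sum_i pi(e_i b) s^i, because the rearranged
  double series has m-th diagonal e_m(b) s^m (1 - 1)^m; this gives surjectivity.
\<close>

lemma sums_in_iff_eventually:
  "sums_in U a x \<longleftrightarrow> (\<forall>n. \<forall>\<^sub>F M in sequentially. x - (\<Sum>i<M. a i) \<in> U n)"
  by (simp add: sums_in_def eventually_sequentially)

lemma null_seq_iff_eventually:
  "null_seq U a \<longleftrightarrow> (\<forall>n. \<forall>\<^sub>F i in sequentially. a i \<in> U n)"
  by (simp add: null_seq_def eventually_sequentially)

lemma rps_iff: "a \<in> rps C U \<longleftrightarrow> (\<forall>i. a i \<in> C) \<and> null_seq U a"
  by (simp add: rps_def)

lemma sum_lessThan_triangle:
  fixes M :: nat
  shows "(\<Sum>m<M. \<Sum>i\<le>m. f i (m - i)) = (\<Sum>i<M. \<Sum>k<M - i. f i k :: 'a::comm_monoid_add)"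
proof -
  have "{(i, k). i + k < M} = Sigma {..<M} (\<lambda>i. {..<M - i})" by auto
  then show ?thesis
    by (simp add: sum.triangle_reindex[symmetric] sum.Sigma)
qed

lemma choose_mult_choose_shift:
  assumes "d \<le> j"
  shows "(t + d choose d) * (t + j choose (t + d)) = (j choose d) * (t + j choose j)"
proof -
  have "(t + j choose (t + d)) * (t + d choose d) = (t + j choose d) * (t + j - d choose t)"
    using choose_mult[of d "t + d" "t + j"] assms by simp
  moreover have "(t + j choose j) * (j choose d) = (t + j choose d) * (t + j - d choose (j - d))"
    using choose_mult[of d j "t + j"] assms by simp
  moreover have "(t + j - d choose t) = (t + j - d choose (j - d))"
    using binomial_symmetric[of t "t + j - d"] assms by simp
  ultimately show ?thesis by (simp add: ac_simps)
qed

text \<open>hasse_deriv j a k is the coefficient of S^k T^j in a(S + T).\<close>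

definition hasse_deriv :: "nat \<Rightarrow> (nat \<Rightarrow> 'a::comm_ring_1) \<Rightarrow> nat \<Rightarrow> 'a" where
  "hasse_deriv j a k = of_nat ((k + j) choose j) * a (k + j)"

locale lin_top_ring =
  fixes U :: "nat \<Rightarrow> 'a::comm_ring_1 set"
  assumes lin_top: "lin_top U"
begin

lemma zero_in_U [simp]: "0 \<in> U n"
  and add_in_U: "x \<in> U n \<Longrightarrow> y \<in> U n \<Longrightarrow> x + y \<in> U n"
  and mult_left_in_U: "x \<in> U n \<Longrightarrow> r * x \<in> U n"
  using lin_top by (simp_all add: lin_top_def is_ideal_def)

lemma mult_right_in_U: "x \<in> U n \<Longrightarrow> x * r \<in> U n"
  by (metis mult.commute mult_left_in_U)

lemma minus_in_U: "x \<in> U n \<Longrightarrow> - x \<in> U n"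
  using mult_left_in_U[of x n "- 1"] by simp

lemma diff_in_U: "x \<in> U n \<Longrightarrow> y \<in> U n \<Longrightarrow> x - y \<in> U n"
  using add_in_U[of x n "- y"] minus_in_U by simp

lemma sum_in_U: "(\<And>i. i \<in> A \<Longrightarrow> f i \<in> U n) \<Longrightarrow> sum f A \<in> U n"
  by (induction A rule: infinite_finite_induct) (simp_all add: add_in_U)

lemma null_seq_mult_right: "null_seq U a \<Longrightarrow> null_seq U (\<lambda>i. a i * c i)"
  unfolding null_seq_def using mult_right_in_U by blast

lemma null_seq_hasse_deriv:
  assumes "null_seq U a"
  shows "null_seq U (hasse_deriv j a)"
  unfolding null_seq_iff_eventually
proof
  fix n
  have "\<forall>\<^sub>F k in sequentially. a (k + j) \<in> U n"
    using assms eventually_sequentially_seg[of "\<lambda>i. a i \<in> U n" j]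
    by (simp add: null_seq_iff_eventually)
  then show "\<forall>\<^sub>F k in sequentially. hasse_deriv j a k \<in> U n"
    by eventually_elim (simp add: hasse_deriv_def mult_left_in_U)
qed

lemma sums_in_add:
  assumes "sums_in U a x" and "sums_in U b y"
  shows "sums_in U (\<lambda>i. a i + b i) (x + y)"
  unfolding sums_in_iff_eventually
proof
  fix n
  from assms[unfolded sums_in_iff_eventually, THEN spec[of _ n]]
  show "\<forall>\<^sub>F M in sequentially. x + y - (\<Sum>i<M. a i + b i) \<in> U n"
    by eventually_elim (drule (1) add_in_U, simp add: sum.distrib algebra_simps)
qed

lemma sums_in_mult_left:
  assumes "sums_in U a x"
  shows "sums_in U (\<lambda>i. c * a i) (c * x)"
  unfolding sums_in_iff_eventually
proof
  fix n
  from assms[unfolded sums_in_iff_eventually, THEN spec[of _ n]]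
  show "\<forall>\<^sub>F M in sequentially. c * x - (\<Sum>i<M. c * a i) \<in> U n"
    by eventually_elim (metis mult_left_in_U right_diff_distrib sum_distrib_left)
qed

lemma sums_in_mult_right: "sums_in U a x \<Longrightarrow> sums_in U (\<lambda>i. a i * c) (x * c)"
  using sums_in_mult_left[of a x c] by (simp add: mult.commute)

lemma sums_in_finite:
  assumes "\<And>i. N \<le> i \<Longrightarrow> a i = 0"
  shows "sums_in U a (\<Sum>i<N. a i)"
  unfolding sums_in_def
proof (intro allI exI[of _ N] impI)
  fix n M assume "N \<le> M"
  then have "(\<Sum>i<M. a i) = (\<Sum>i<N. a i)"
    by (intro sum.mono_neutral_right) (auto simp: assms)
  then show "(\<Sum>i<N. a i) - (\<Sum>i<M. a i) \<in> U n" by simp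
qed

lemma sums_in_shift_iff:
  assumes "\<And>i. i < d \<Longrightarrow> a i = 0"
  shows "sums_in U (\<lambda>t. a (t + d)) x \<longleftrightarrow> sums_in U a x"
proof -
  have "(\<Sum>i<t + d. a i) = (\<Sum>i<t. a (i + d))" for t
  proof -
    have "(\<Sum>i<t + d. a i) = (\<Sum>i\<in>{0 + d..<t + d}. a i)"
      by (intro sum.mono_neutral_right) (auto simp: assms)
    also have "\<dots> = (\<Sum>i<t. a (i + d))"
      by (simp only: sum.shift_bounds_nat_ivl atLeast0LessThan)
    finally show ?thesis .
  qed
  then show ?thesis
    unfolding sums_in_iff_eventually
    by (simp flip: eventually_sequentially_seg[where k = d and P = "\<lambda>M. x - (\<Sum>i<M. a i) \<in> U _"])
qed

lemma sums_in_additive: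
  assumes "additive \<phi>" and cont: "\<And>n. \<exists>m. \<forall>b\<in>U m. \<phi> b \<in> U n"
    and "sums_in U a x"
  shows "sums_in U (\<lambda>i. \<phi> (a i)) (\<phi> x)"
  unfolding sums_in_iff_eventually
proof
  fix n
  obtain m where m: "\<forall>b\<in>U m. \<phi> b \<in> U n" using cont by blast
  from assms(3)[unfolded sums_in_iff_eventually, THEN spec[of _ m]]
  show "\<forall>\<^sub>F M in sequentially. \<phi> x - (\<Sum>i<M. \<phi> (a i)) \<in> U n"
    by eventually_elim (use m additive.diff[OF assms(1)] additive.sum[OF assms(1)] in metis)
qed

lemma sums_in_tail:
  assumes "sums_in U a x" and "\<And>i. K \<le> i \<Longrightarrow> a i \<in> U n"
  shows "x - (\<Sum>i<K. a i) \<in> U n"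
proof -
  obtain N where N: "\<forall>M\<ge>N. x - (\<Sum>i<M. a i) \<in> U n"
    using assms(1) unfolding sums_in_def by blast
  define M where "M = max N K"
  have "(\<Sum>i\<in>{K..<M}. a i) \<in> U n"
    by (rule sum_in_U) (simp add: assms(2))
  then have "(\<Sum>i<M. a i) - (\<Sum>i<K. a i) \<in> U n"
    using sum_diff_nat_ivl[of 0 K M a] by (simp add: M_def atLeast0LessThan)
  moreover have "x - (\<Sum>i<M. a i) \<in> U n" using N by (simp add: M_def)
  ultimately show ?thesis
    using add_in_U by fastforce
qed

lemma sums_in_sum:
  assumes "finite A" and "\<And>l. l \<in> A \<Longrightarrow> sums_in U (f l) (x l)"
  shows "sums_in U (\<lambda>k. \<Sum>l\<in>A. f l k) (\<Sum>l\<in>A. x l)"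
  using assms
proof (induction A rule: finite_induct)
  case empty
  then show ?case using sums_in_finite[of 0 "\<lambda>_. 0"] by simp
next
  case (insert l A)
  then show ?case using sums_in_add[of "f l" "x l"] by simp
qed

lemma sums_in_asymp_iff:
  assumes "\<forall>n. \<forall>\<^sub>F M in sequentially. (\<Sum>i<M. a i) - (\<Sum>i<M. b i) \<in> U n"
  shows "sums_in U a x \<longleftrightarrow> sums_in U b x"
  unfolding sums_in_iff_eventually
proof (intro iffI allI)
  fix n
  assume "\<forall>n. \<forall>\<^sub>F M in sequentially. x - (\<Sum>i<M. a i) \<in> U n"
  from this[THEN spec[of _ n]] assms[THEN spec[of _ n]]
  show "\<forall>\<^sub>F M in sequentially. x - (\<Sum>i<M. b i) \<in> U n"
    by eventually_elim (metis add_in_U diff_add_cancel add_diff_eq)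
next
  fix n
  assume "\<forall>n. \<forall>\<^sub>F M in sequentially. x - (\<Sum>i<M. b i) \<in> U n"
  from this[THEN spec[of _ n]] assms[THEN spec[of _ n]]
  show "\<forall>\<^sub>F M in sequentially. x - (\<Sum>i<M. a i) \<in> U n"
    by eventually_elim (metis diff_in_U diff_diff_eq2 diff_add_cancel)
qed

lemma sums_in_diagonal_iff:
  assumes small: "\<forall>n. \<exists>N. \<forall>i k. N \<le> i + k \<longrightarrow> f i k \<in> U n"
    and rows: "\<And>i. sums_in U (f i) (g i)"
  shows "sums_in U g x \<longleftrightarrow> sums_in U (\<lambda>m. \<Sum>i\<le>m. f i (m - i)) x"
proof (rule sums_in_asymp_iff, intro allI)
  fix n
  obtain N where N: "\<forall>i k. N \<le> i + k \<longrightarrow> f i k \<in> U n" using small by blast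
  have "(\<Sum>i<M. g i) - (\<Sum>m<M. \<Sum>i\<le>m. f i (m - i)) \<in> U n" if "N \<le> M" for M
  proof -
    have "g i - (\<Sum>k<M - i. f i k) \<in> U n" if "i < M" for i
      using \<open>N \<le> M\<close> \<open>i < M\<close> N by (intro sums_in_tail[OF rows]) auto
    then have "(\<Sum>i<M. g i - (\<Sum>k<M - i. f i k)) \<in> U n"
      by (intro sum_in_U) simp
    then show ?thesis
      by (simp add: sum_lessThan_triangle sum_subtractf)
  qed
  then show "\<forall>\<^sub>F M in sequentially. (\<Sum>i<M. g i) - (\<Sum>m<M. \<Sum>i\<le>m. f i (m - i)) \<in> U n"
    by (auto simp: eventually_sequentially)
qed

lemma sums_in_cprod:
  assumes "null_seq U a" "null_seq U b" "sums_in U a x" "sums_in U b y"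
  shows "sums_in U (cprod a b) (x * y)"
proof -
  have small: "\<forall>n. \<exists>N. \<forall>i k. N \<le> i + k \<longrightarrow> a i * b k \<in> U n"
  proof
    fix n
    obtain Na Nb where "\<forall>i\<ge>Na. a i \<in> U n" "\<forall>k\<ge>Nb. b k \<in> U n"
      using assms(1,2) unfolding null_seq_def by meson
    then have "\<forall>i k. Na + Nb \<le> i + k \<longrightarrow> a i * b k \<in> U n"
      by (metis add_less_mono not_less mult_left_in_U mult_right_in_U)
    then show "\<exists>N. \<forall>i k. N \<le> i + k \<longrightarrow> a i * b k \<in> U n" by blast
  qed
  have "sums_in U (\<lambda>i. a i * y) (x * y)"
    by (rule sums_in_mult_right[OF assms(3)])
  then show ?thesis
    unfolding cprod_def
    by (subst (asm) sums_in_diagonal_iff[OF small sums_in_mult_left[OF assms(4)]])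
qed

end

locale complete_lin_top = lin_top_ring +
  assumes complete: "complete_lt U"
begin

lemma Inter_U: "(\<Inter>n. U n) = {0}"
  and complete_U: "(\<And>n. x (Suc n) - x n \<in> U n) \<Longrightarrow> \<exists>y. \<forall>n. y - x n \<in> U n"
  using complete by (simp_all add: complete_lt_def)

lemma sums_in_unique:
  assumes "sums_in U a x" and "sums_in U a y"
  shows "x = y"
proof -
  have "x - y \<in> U n" for n
  proof -
    from assms[unfolded sums_in_iff_eventually, THEN spec[of _ n]]
    have "\<forall>\<^sub>F M in sequentially. x - y \<in> U n"
      by eventually_elim (drule (1) diff_in_U, simp)
    then show ?thesis by (auto simp: eventually_sequentially)
  qed
  then have "x - y \<in> (\<Inter>n. U n)" by blast
  then show ?thesis
    by (simp add: Inter_U)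
qed

lemma null_seq_imp_sums_in:
  assumes "null_seq U a"
  shows "\<exists>x. sums_in U a x"
proof -
  have "\<forall>n. \<exists>N. \<forall>i\<ge>N. a i \<in> U n"
    using assms by (simp add: null_seq_def)
  from choice[OF this] obtain N0 where N0: "\<forall>n. \<forall>i\<ge>N0 n. a i \<in> U n" by blast
  define N where "N n = (\<Sum>k\<le>n. N0 k)" for n
  have N_mono: "N n \<le> N m" if "n \<le> m" for n m
    unfolding N_def using that by (intro sum_mono2) auto
  have N0_le: "N0 n \<le> N n" for n
    unfolding N_def by (rule member_le_sum) auto
  have tail: "(\<Sum>i\<in>{N n..<M}. a i) \<in> U n" for n M
    by (rule sum_in_U) (meson N0 N0_le atLeastLessThan_iff le_trans)
  have partial_diff: "(\<Sum>i<M. a i) - (\<Sum>i<N n. a i) = (\<Sum>i\<in>{N n..<M}. a i)"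
    if "N n \<le> M" for n M
    using sum_diff_nat_ivl[of 0 "N n" M a] that by (simp add: atLeast0LessThan)
  have "(\<Sum>i<N (Suc n). a i) - (\<Sum>i<N n. a i) \<in> U n" for n
    using partial_diff[OF N_mono[of n "Suc n"]] tail by simp
  then obtain x where x: "\<And>n. x - (\<Sum>i<N n. a i) \<in> U n"
    using complete_U[of "\<lambda>n. \<Sum>i<N n. a i"] by blast
  have "x - (\<Sum>i<M. a i) \<in> U n" if "N n \<le> M" for n M
  proof -
    have "x - (\<Sum>i<M. a i) = (x - (\<Sum>i<N n. a i)) - (\<Sum>i\<in>{N n..<M}. a i)"
      by (simp flip: partial_diff[OF that])
    then show ?thesis
      by (simp only: diff_in_U[OF x tail])
  qed
  then show ?thesis
    unfolding sums_in_def by blast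
qed

lemma rps_eval_eqI: "sums_in U (\<lambda>i. a i * s ^ i) x \<Longrightarrow> rps_eval U s a = x"
  unfolding rps_eval_def using sums_in_unique by blast

lemma rps_eval_sums_in: "null_seq U a \<Longrightarrow> sums_in U (\<lambda>i. a i * s ^ i) (rps_eval U s a)"
  using null_seq_imp_sums_in[OF null_seq_mult_right] rps_eval_eqI by blast

lemma rps_eval_add:
  assumes "null_seq U a" and "null_seq U b"
  shows "rps_eval U s (\<lambda>i. a i + b i) = rps_eval U s a + rps_eval U s b"
  using sums_in_add[OF rps_eval_sums_in[OF assms(1)] rps_eval_sums_in[OF assms(2)]]
  by (intro rps_eval_eqI) (simp add: distrib_right)

lemma rps_eval_cprod:
  assumes "null_seq U a" and "null_seq U b"
  shows "rps_eval U s (cprod a b) = rps_eval U s a * rps_eval U s b"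
proof (rule rps_eval_eqI)
  have "cprod (\<lambda>i. a i * s ^ i) (\<lambda>i. b i * s ^ i) = (\<lambda>m. cprod a b m * s ^ m)"
    unfolding cprod_def sum_distrib_right
    by (intro ext sum.cong) (simp_all add: power_add[symmetric] ac_simps)
  moreover have "sums_in U (cprod (\<lambda>i. a i * s ^ i) (\<lambda>i. b i * s ^ i))
      (rps_eval U s a * rps_eval U s b)"
    using assms by (intro sums_in_cprod null_seq_mult_right rps_eval_sums_in)
  ultimately show "sums_in U (\<lambda>m. cprod a b m * s ^ m) (rps_eval U s a * rps_eval U s b)"
    by simp
qed

lemma rps_eval_delta: "rps_eval U s (\<lambda>i. if i = 0 then c else 0) = c"
  by (rule rps_eval_eqI) (use sums_in_finite[of 1 "\<lambda>i. (if i = 0 then c else 0) * s ^ i"] in simp)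

lemma rps_eval_in_U: "null_seq U a \<Longrightarrow> (\<And>i. a i \<in> U n) \<Longrightarrow> rps_eval U s a \<in> U n"
  using sums_in_tail[OF rps_eval_sums_in[of a s], of 0 n] mult_right_in_U by simp

end

locale restricted_exp = complete_lin_top U for U :: "nat \<Rightarrow> 'a::comm_ring_1 set" +
  fixes e :: "nat \<Rightarrow> 'a \<Rightarrow> 'a"
  assumes rexp: "rexp_hom U e"
begin

lemma null_seq_e: "null_seq U (\<lambda>i. e i b)"
  and e_add: "e i (b + c) = e i b + e i c"
  and e_mult: "e n (b * c) = (\<Sum>i\<le>n. e i b * e (n - i) c)"
  and e_one: "e i 1 = (if i = 0 then 1 else 0)"
  and e_continuous: "\<exists>m. \<forall>b\<in>U m. \<forall>i. e i b \<in> U n"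
  and e_0 [simp]: "e 0 b = b"
  and e_e: "e j (e i b) = of_nat ((i + j) choose i) * e (i + j) b"
  using rexp unfolding rexp_hom_def cprod_def by blast+

lemma additive_e: "additive (e j)"
  by (rule additive.intro) (rule e_add)

lemma e_continuous_at: "\<exists>m. \<forall>b\<in>U m. e j b \<in> U n"
  using e_continuous by blast

lemma e_mult_fixed:
  assumes "c \<in> fixed_ring e"
  shows "e j (c * b) = c * e j b"
proof -
  have "e j (c * b) = (\<Sum>i\<in>{0}. e i c * e (j - i) b)"
    unfolding e_mult using assms by (intro sum.mono_neutral_right) (auto simp: fixed_ring_def)
  then show ?thesis by simp
qed

lemma fixed_ring_mult: "c \<in> fixed_ring e \<Longrightarrow> d \<in> fixed_ring e \<Longrightarrow> c * d \<in> fixed_ring e"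
  by (simp add: fixed_ring_def e_mult_fixed)

lemma one_in_fixed_ring: "1 \<in> fixed_ring e"
  by (simp add: fixed_ring_def e_one)

lemma minus_in_fixed_ring: "c \<in> fixed_ring e \<Longrightarrow> - c \<in> fixed_ring e"
  by (simp add: fixed_ring_def additive.minus[OF additive_e])

lemma minus_one_power_in_fixed_ring: "(- 1) ^ k \<in> fixed_ring e"
  by (induction k) (simp_all add: one_in_fixed_ring minus_in_fixed_ring)

lemma of_nat_in_fixed_ring: "of_nat k \<in> fixed_ring e"
  by (induction k) (simp_all add: fixed_ring_def e_add e_one additive.zero[OF additive_e])

lemma hasse_deriv_in_rps:
  "a \<in> rps (fixed_ring e) U \<Longrightarrow> hasse_deriv j a \<in> rps (fixed_ring e) U"
  by (simp add: rps_iff null_seq_hasse_deriv hasse_deriv_def fixed_ring_mult of_nat_in_fixed_ring)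

end

locale restricted_exp_slice = restricted_exp U e for U :: "nat \<Rightarrow> 'a::comm_ring_1 set" and e +
  fixes s :: 'a
  assumes e_slice: "\<forall>i. e i s = (if i = 0 then s else if i = 1 then 1 else 0)"
begin

lemma e_Suc_mult_slice: "e (Suc j) (s * b) = s * e (Suc j) b + e j b"
proof -
  have "e (Suc j) (s * b) = (\<Sum>i\<in>{0, 1}. e i s * e (Suc j - i) b)"
    unfolding e_mult by (intro sum.mono_neutral_right) (auto simp: e_slice)
  then show ?thesis by (simp add: e_slice)
qed

lemma e_slice_power: "e j (s ^ i) = of_nat (i choose j) * s ^ (i - j)"
proof (induction i arbitrary: j)
  case 0
  then show ?case by (cases j) (simp_all add: e_one)
next
  case (Suc i)
  show ?case
  proof (cases j)
    case 0
    then show ?thesis by simp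
  next
    case (Suc j')
    have "s * (of_nat (i choose Suc j') * s ^ (i - Suc j')) = of_nat (i choose Suc j') * s ^ (i - j')"
    proof (cases "j' < i")
      case True
      then have "i - j' = Suc (i - Suc j')" by simp
      then show ?thesis by (simp add: mult.left_commute)
    qed (simp add: binomial_eq_0)
    then show ?thesis
      by (simp add: Suc e_Suc_mult_slice Suc.IH distrib_right)
  qed
qed

lemma e_minus_slice_power: "e j ((- s) ^ i) = (- 1) ^ i * of_nat (i choose j) * s ^ (i - j)"
  by (simp add: power_minus[of s] e_mult_fixed minus_one_power_in_fixed_ring e_slice_power)

lemma e_rps_eval:
  assumes "a \<in> rps (fixed_ring e) U"
  shows "e j (rps_eval U s a) = rps_eval U s (hasse_deriv j a)"
proof (rule sym, rule rps_eval_eqI)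
  have a: "\<And>i. a i \<in> fixed_ring e" "null_seq U a"
    using assms by (simp_all add: rps_iff)
  have "sums_in U (\<lambda>i. e j (a i * s ^ i)) (e j (rps_eval U s a))"
    by (rule sums_in_additive[OF additive_e e_continuous_at rps_eval_sums_in[OF a(2)]])
  moreover have "e j (a i * s ^ i) = of_nat (i choose j) * a i * s ^ (i - j)" for i
    using a(1) by (simp add: e_mult_fixed e_slice_power ac_simps)
  ultimately show "sums_in U (\<lambda>k. hasse_deriv j a k * s ^ k) (e j (rps_eval U s a))"
    using sums_in_shift_iff[of j "\<lambda>i. of_nat (i choose j) * a i * s ^ (i - j)"]
    by (simp add: hasse_deriv_def binomial_eq_0)
qed

definition dixmier :: "'a \<Rightarrow> 'a" where
  "dixmier b = rps_eval U (- s) (\<lambda>k. e k b)"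

lemma dixmier_sums_in: "sums_in U (\<lambda>k. e k b * (- s) ^ k) (dixmier b)"
  unfolding dixmier_def by (rule rps_eval_sums_in[OF null_seq_e])

lemma additive_dixmier: "additive dixmier"
  by (rule additive.intro) (simp add: dixmier_def e_add rps_eval_add null_seq_e)

lemma dixmier_continuous: "\<exists>m. \<forall>b\<in>U m. dixmier b \<in> U n"
proof -
  obtain m where "\<forall>b\<in>U m. \<forall>i. e i b \<in> U n"
    using e_continuous by blast
  then show ?thesis
    unfolding dixmier_def by (blast intro: rps_eval_in_U null_seq_e)
qed

lemma dixmier_mult_slice_power:
  assumes c: "c \<in> fixed_ring e"
  shows "dixmier (c * s ^ i) = (if i = 0 then c else 0)"
proof -
  have "sums_in U (\<lambda>k. e k (c * s ^ i) * (- s) ^ k) (\<Sum>k<Suc i. e k (c * s ^ i) * (- s) ^ k)"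
    by (rule sums_in_finite) (simp add: e_mult_fixed[OF c] e_slice_power binomial_eq_0)
  moreover have "(\<Sum>k<Suc i. e k (c * s ^ i) * (- s) ^ k)
      = c * (\<Sum>k\<le>i. of_nat (i choose k) * (- s) ^ k * s ^ (i - k))"
    by (simp add: e_mult_fixed[OF c] e_slice_power lessThan_Suc_atMost sum_distrib_left ac_simps)
  moreover have "(\<Sum>k\<le>i. of_nat (i choose k) * (- s) ^ k * s ^ (i - k)) = (- s + s) ^ i"
    by (simp only: binomial_ring)
  ultimately show ?thesis
    using dixmier_sums_in sums_in_unique by (fastforce simp: power_0_left)
qed

lemma dixmier_fixed: "c \<in> fixed_ring e \<Longrightarrow> dixmier c = c"
  using dixmier_mult_slice_power[of c 0] by simp

lemma dixmier_rps_eval: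
  assumes "a \<in> rps (fixed_ring e) U"
  shows "dixmier (rps_eval U s a) = a 0"
proof (rule sums_in_unique)
  show "sums_in U (\<lambda>i. dixmier (a i * s ^ i)) (dixmier (rps_eval U s a))"
    using assms unfolding rps_iff
    by (intro sums_in_additive[OF additive_dixmier dixmier_continuous rps_eval_sums_in]) simp
  show "sums_in U (\<lambda>i. dixmier (a i * s ^ i)) (a 0)"
    using sums_in_finite[of 1 "\<lambda>i. dixmier (a i * s ^ i)"] assms
    by (simp add: dixmier_mult_slice_power dixmier_fixed rps_iff)
qed

lemma dixmier_e_rps_eval:
  "a \<in> rps (fixed_ring e) U \<Longrightarrow> dixmier (e j (rps_eval U s a)) = a j"
  by (simp add: e_rps_eval dixmier_rps_eval hasse_deriv_in_rps hasse_deriv_def)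

lemma sums_in_e_dixmier_term:
  assumes "d \<le> j"
  shows "sums_in U (\<lambda>k. e d ((- s) ^ k) * e (j - d) (e k b))
    ((- 1) ^ d * of_nat (j choose d) * rps_eval U (- s) (hasse_deriv j (\<lambda>i. e i b)))"
proof -
  have shifted: "e d ((- s) ^ (t + d)) * e (j - d) (e (t + d) b)
      = (- 1) ^ d * of_nat (j choose d) * (hasse_deriv j (\<lambda>i. e i b) t * (- s) ^ t)" for t
  proof -
    have "t + d + (j - d) = t + j" using assms by simp
    then have "e d ((- s) ^ (t + d)) * e (j - d) (e (t + d) b)
        = (- 1) ^ (t + d) * s ^ t * e (t + j) b * of_nat ((t + d choose d) * (t + j choose (t + d)))"
      by (simp add: e_minus_slice_power e_e ac_simps)
    also have "\<dots> = (- 1) ^ d * of_nat (j choose d) * (hasse_deriv j (\<lambda>i. e i b) t * (- s) ^ t)"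
      unfolding choose_mult_choose_shift[OF assms]
      by (simp add: hasse_deriv_def power_add power_minus[of s] ac_simps)
    finally show ?thesis .
  qed
  have "sums_in U (\<lambda>t. e d ((- s) ^ (t + d)) * e (j - d) (e (t + d) b))
      ((- 1) ^ d * of_nat (j choose d) * rps_eval U (- s) (hasse_deriv j (\<lambda>i. e i b)))"
    unfolding shifted by (intro sums_in_mult_left rps_eval_sums_in null_seq_hasse_deriv null_seq_e)
  then show ?thesis
    using sums_in_shift_iff[of d "\<lambda>k. e d ((- s) ^ k) * e (j - d) (e k b)"]
    by (simp add: e_minus_slice_power binomial_eq_0)
qed

lemma e_dixmier:
  assumes "0 < j"
  shows "e j (dixmier b) = 0"
proof (rule sums_in_unique)
  let ?G = "rps_eval U (- s) (hasse_deriv j (\<lambda>i. e i b))"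
  show "sums_in U (\<lambda>k. e j (e k b * (- s) ^ k)) (e j (dixmier b))"
    by (rule sums_in_additive[OF additive_e e_continuous_at dixmier_sums_in])
  have "e j (e k b * (- s) ^ k) = (\<Sum>d\<le>j. e d ((- s) ^ k) * e (j - d) (e k b))" for k
    using e_mult[of j "(- s) ^ k" "e k b"] by (simp add: mult.commute)
  moreover have "sums_in U (\<lambda>k. \<Sum>d\<le>j. e d ((- s) ^ k) * e (j - d) (e k b))
      (\<Sum>d\<le>j. (- 1) ^ d * of_nat (j choose d) * ?G)"
    by (rule sums_in_sum) (simp_all add: sums_in_e_dixmier_term)
  moreover have "(\<Sum>d\<le>j. (- 1) ^ d * of_nat (j choose d) * ?G) = 0"
    using choose_alternating_sum[OF assms, where 'a = 'a] by (simp flip: sum_distrib_right)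
  ultimately show "sums_in U (\<lambda>k. e j (e k b * (- s) ^ k)) 0"
    by simp
qed

lemma dixmier_in_fixed_ring: "dixmier b \<in> fixed_ring e"
  by (simp add: fixed_ring_def e_dixmier)

lemma dixmier_expansion_diagonal:
  "(\<Sum>i\<le>m. e (m - i) (e i b) * (- s) ^ (m - i) * s ^ i) = (if m = 0 then b else 0)"
proof -
  have "e (m - i) (e i b) * (- s) ^ (m - i) * s ^ i
      = e m b * s ^ m * (of_nat (m choose i) * 1 ^ i * (- 1) ^ (m - i))" if "i \<le> m" for i
  proof -
    have "e (m - i) (e i b) * (- s) ^ (m - i) * s ^ i
        = e m b * (s ^ (m - i) * s ^ i) * (of_nat (m choose i) * 1 ^ i * (- 1) ^ (m - i))"
      using that by (simp add: e_e power_minus[of s] ac_simps)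
    then show ?thesis
      using that by (simp flip: power_add)
  qed
  then have "(\<Sum>i\<le>m. e (m - i) (e i b) * (- s) ^ (m - i) * s ^ i)
      = e m b * s ^ m * (\<Sum>i\<le>m. of_nat (m choose i) * 1 ^ i * (- 1) ^ (m - i))"
    by (simp add: sum_distrib_left)
  also have "\<dots> = e m b * s ^ m * (1 + - 1) ^ m"
    by (simp only: binomial_ring)
  also have "\<dots> = (if m = 0 then b else 0)"
    by (simp add: power_0_left)
  finally show ?thesis .
qed

lemma sums_in_dixmier_expansion: "sums_in U (\<lambda>i. dixmier (e i b) * s ^ i) b"
proof -
  define f where "f i k = e k (e i b) * (- s) ^ k * s ^ i" for i k
  have rows: "sums_in U (f i) (dixmier (e i b) * s ^ i)" for i
    unfolding f_def by (rule sums_in_mult_right[OF dixmier_sums_in])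
  have small: "\<forall>n. \<exists>N. \<forall>i k. N \<le> i + k \<longrightarrow> f i k \<in> U n"
  proof
    fix n
    obtain N where N: "\<forall>m\<ge>N. e m b \<in> U n"
      using null_seq_e unfolding null_seq_def by blast
    then have "\<forall>i k. N \<le> i + k \<longrightarrow> f i k \<in> U n"
      by (simp add: f_def e_e mult_left_in_U mult_right_in_U)
    then show "\<exists>N. \<forall>i k. N \<le> i + k \<longrightarrow> f i k \<in> U n" by blast
  qed
  have "sums_in U (\<lambda>m. \<Sum>i\<le>m. f i (m - i)) b"
    unfolding f_def dixmier_expansion_diagonal
    using sums_in_finite[of 1 "\<lambda>m. if m = 0 then b else 0"] by simp
  then show ?thesis
    using sums_in_diagonal_iff[OF small rows] by blast
qed

lemma dixmier_coeffs_in_rps: "(\<lambda>i. dixmier (e i b)) \<in> rps (fixed_ring e) U"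
  unfolding rps_iff null_seq_def
proof (intro conjI allI dixmier_in_fixed_ring)
  fix n
  obtain m where m: "\<forall>x\<in>U m. dixmier x \<in> U n"
    using dixmier_continuous by blast
  obtain N where "\<forall>i\<ge>N. e i b \<in> U m"
    using null_seq_e unfolding null_seq_def by blast
  with m show "\<exists>N. \<forall>i\<ge>N. dixmier (e i b) \<in> U n" by blast
qed

lemma bij_betw_rps_eval: "bij_betw (rps_eval U s) (rps (fixed_ring e) U) UNIV"
proof (rule bij_betw_byWitness[where f' = "\<lambda>b i. dixmier (e i b)"])
  show "\<forall>a\<in>rps (fixed_ring e) U. (\<lambda>i. dixmier (e i (rps_eval U s a))) = a"
    by (simp add: dixmier_e_rps_eval)
  show "\<forall>b\<in>UNIV. rps_eval U s (\<lambda>i. dixmier (e i b)) = b"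
    by (simp add: rps_eval_eqI sums_in_dixmier_expansion)
  show "(\<lambda>b i. dixmier (e i b)) ` UNIV \<subseteq> rps (fixed_ring e) U"
    using dixmier_coeffs_in_rps by blast
qed simp

lemma rps_eval_coeffs_continuous:
  "\<exists>m. \<forall>a\<in>rps (fixed_ring e) U. rps_eval U s a \<in> U m \<longrightarrow> (\<forall>i. a i \<in> U n)"
proof -
  obtain m' where m': "\<forall>x\<in>U m'. dixmier x \<in> U n"
    using dixmier_continuous by blast
  obtain m where "\<forall>x\<in>U m. \<forall>i. e i x \<in> U m'"
    using e_continuous by blast
  with m' show ?thesis
    by (metis dixmier_e_rps_eval)
qed

end

theorem corollary2p18:
  fixes U :: "nat \<Rightarrow> 'a::comm_ring_1 set"
    and e :: "nat \<Rightarrow> 'a \<Rightarrow> 'a"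
    and s :: 'a
  assumes "lin_top U"
    and "complete_lt U"
    and "rexp_hom U e"
    and "\<forall>i. e i s = (if i = 0 then s else if i = 1 then 1 else 0)"
  shows
    "(\<forall>a\<in>rps (fixed_ring e) U. sums_in U (\<lambda>i. a i * s ^ i) (rps_eval U s a))
     \<and> (\<forall>a\<in>rps (fixed_ring e) U. \<forall>b\<in>rps (fixed_ring e) U.
          rps_eval U s (\<lambda>i. a i + b i) = rps_eval U s a + rps_eval U s b
          \<and> rps_eval U s (cprod a b) = rps_eval U s a * rps_eval U s b)
     \<and> rps_eval U s (\<lambda>i. if i = 0 then 1 else 0) = 1
     \<and> bij_betw (rps_eval U s) (rps (fixed_ring e) U) UNIV
     \<and> (\<forall>n. \<exists>m. \<forall>a\<in>rps (fixed_ring e) U. (\<forall>i. a i \<in> U m) \<longrightarrow> rps_eval U s a \<in> U n)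
     \<and> (\<forall>n. \<exists>m. \<forall>a\<in>rps (fixed_ring e) U. rps_eval U s a \<in> U m \<longrightarrow> (\<forall>i. a i \<in> U n))
     \<and> (\<forall>a\<in>rps (fixed_ring e) U. \<forall>j.
          e j (rps_eval U s a) = rps_eval U s (\<lambda>k. of_nat ((k + j) choose j) * a (k + j)))"
proof -
  interpret restricted_exp_slice U e s
    by unfold_locales (use assms in auto)
  have "\<exists>m. \<forall>a\<in>rps (fixed_ring e) U. (\<forall>i. a i \<in> U m) \<longrightarrow> rps_eval U s a \<in> U n" for n
    by (intro exI[of _ n]) (auto simp: rps_iff intro: rps_eval_in_U)
  then show ?thesis
    using e_rps_eval[unfolded hasse_deriv_def[abs_def]]
    by (auto simp: rps_iff rps_eval_sums_in rps_eval_add rps_eval_cprod rps_eval_delta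
        bij_betw_rps_eval rps_eval_coeffs_continuous)
qed

end
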